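(* Let $M$ and $N$ be two quasianalytic weight sequences and let $(\omega^M_{j,k})_{j,k\in\mathbb N}$ be numbers as in the representation formula for $M$. Assume $\sup_{k\in\mathbb N_{>0}}n_k^{1/k}=+\infty$ (Roumieu case) resp. $\lim_{k\to+\infty}n_k^{1/k}=+\infty$ (Beurling case). Then there exist $\mathbf F=(F_j)_{j\in\mathbb N}\in\Lambda^1_{\{N\}}$ resp. $\mathbf F\in\Lambda^1_{(N)}$ and $a_0\in(0,1]$ such that $$\limsup_{k\to+\infty}\Big|\sum_{j=0}^{k-1}\omega^M_{j,k}F_ja^j\Big|=+\infty\quad\text{for all }0<a\le a_0.$$
   Context: For a sequence $M=(M_p)_{p\in\mathbb N}$ of positive reals write $m_p:=M_p/p!$ (and $n_p:=N_p/p!$). $M$ is a weight sequence if $1=M_0\le M_1$, $M_p^2\le M_{p-1}M_{p+1}$ for all $p\ge1$, and $\liminf_{p\to\infty}m_p^{1/p}>0$; it is quasianalytic if $\sum_{p\ge1}M_{p-1}/M_p=+\infty$. For $\mathbf b=(b_\alpha)_{\alpha\in\mathbb N^r}\in\mathbb C^{\mathbb N^r}$ and $h>0$ put $|\mathbf b|^N_h:=\sup_{\alpha}|b_\alpha|/(h^{|\alpha|}n_{|\alpha|})$; $\Lambda^r_{\{N\}}:=\{\mathbf b:\exists h>0,\ |\mathbf b|^N_h<\infty\}$ and $\Lambda^r_{(N)}:=\{\mathbf b:\forall h>0,\ |\mathbf b|^N_h<\infty\}$. Representation formula (Thilliez): for every quasianalytic weight sequence $M$ there exist numbers $(\omega^M_{j,k})_{j,k\in\mathbb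 N}$ such that $\lim_{k\to+\infty}\omega^M_{j,k}=1$ for every $j$, and for every germ $f$ at $0\in\mathbb R$ of a smooth function $f$ on some $(-1/k,1/k)$ satisfying: for each compact $K$ there is $h>0$ with $\sup_{j,x\in K}|f^{(j)}(x)|/(h^jM_j)<\infty$, one has $f(x)=\lim_{k}\sum_{j=0}^{k-1}\omega^M_{j,k}\frac{f^{(j)}(0)}{j!}x^j$ for all $x>0$ small enough. *)

theory Defs
  imports "HOL-Analysis.Analysis"
begin

definition normseq :: "(nat \<Rightarrow> real) \<Rightarrow> nat \<Rightarrow> real" where
  "normseq M p = M p / fact p"

definition weight_sequence :: "(nat \<Rightarrow> real) \<Rightarrow> bool" where
  "weight_sequence M \<longleftrightarrow>
     (\<forall>p. M p > 0) \<and> M 0 = 1 \<and> M 0 \<le> M 1 \<and>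
     (\<forall>p\<ge>1. (M p)^2 \<le> M (p - 1) * M (p + 1)) \<and>
     liminf (\<lambda>p. ereal (root p (normseq M p))) > 0"

definition quasianalytic :: "(nat \<Rightarrow> real) \<Rightarrow> bool" where
  "quasianalytic M \<longleftrightarrow> \<not> summable (\<lambda>p. M p / M (Suc p))"

text \<open>The seminorm |b|^N_h (one variable, r = 1), valued in the extended reals.\<close>
definition lambda_seminorm :: "(nat \<Rightarrow> real) \<Rightarrow> real \<Rightarrow> (nat \<Rightarrow> complex) \<Rightarrow> ereal" where
  "lambda_seminorm N h b = (SUP \<alpha>. ereal (cmod (b \<alpha>) / (h ^ \<alpha> * normseq N \<alpha>)))"

definition Lambda_Roumieu :: "(nat \<Rightarrow> real) \<Rightarrow> (nat \<Rightarrow> complex) set" where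
  "Lambda_Roumieu N = {b. \<exists>h>0. lambda_seminorm N h b < \<infinity>}"

definition Lambda_Beurling :: "(nat \<Rightarrow> real) \<Rightarrow> (nat \<Rightarrow> complex) set" where
  "Lambda_Beurling N = {b. \<forall>h>0. lambda_seminorm N h b < \<infinity>}"

definition germ_class :: "(nat \<Rightarrow> real) \<Rightarrow> real \<Rightarrow> (real \<Rightarrow> real) \<Rightarrow> bool" where
  "germ_class M r f \<longleftrightarrow> r > 0 \<and>
     (\<forall>n. (deriv ^^ n) f differentiable_on {-r<..<r}) \<and>
     (\<forall>K. compact K \<and> K \<subseteq> {-r<..<r} \<longrightarrow>
        (\<exists>h>0. \<exists>C. \<forall>j. \<forall>x\<in>K. \<bar>(deriv ^^ j) f x\<bar> / (h ^ j * M j) \<le> C))"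

definition representation_coeffs :: "(nat \<Rightarrow> real) \<Rightarrow> (nat \<Rightarrow> nat \<Rightarrow> real) \<Rightarrow> bool" where
  "representation_coeffs M \<omega> \<longleftrightarrow>
     (\<forall>j. (\<lambda>k. \<omega> j k) \<longlonglongrightarrow> 1) \<and>
     (\<forall>f k. germ_class M (1 / real (Suc k)) f \<longrightarrow>
        (\<exists>\<delta>>0. \<forall>x. 0 < x \<and> x < \<delta> \<longrightarrow>
           (\<lambda>k. \<Sum>j<k. \<omega> j k * ((deriv ^^ j) f 0 / fact j) * x ^ j) \<longlonglongrightarrow> f x))"

end

theory Submission
  imports Defs
begin

text \<open>
  Choose indices \<open>j\<^sub>0 < k\<^sub>0 \<le> j\<^sub>1 < k\<^sub>1 \<le> \<dots>\<close> with \<open>n\<^bsub>j\<^sub>i\<^esub>\<^bsup>1/j\<^sub>i\<^esup> \<ge> (i+1)\<^sup>2\<close> and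
  \<open>\<omega>\<^bsub>j,k\<^sub>i\<^esub> > 1/2\<close> for all \<open>j \<le> j\<^sub>i\<close>, and put \<open>F\<^bsub>j\<^sub>i\<^esub> = n\<^bsub>j\<^sub>i\<^esub>/(i+1)\<^bsup>j\<^sub>i\<^esup>\<close> and \<open>F\<^sub>j = 0\<close>
  otherwise. Then \<open>|F\<^bsub>j\<^sub>i\<^esub>|/(h\<^bsup>j\<^sub>i\<^esup> n\<^bsub>j\<^sub>i\<^esub>) = ((i+1)h)\<^bsup>-j\<^sub>i\<^esup>\<close> is bounded for every \<open>h > 0\<close>,
  so \<open>F\<close> lies in the Beurling (hence also the Roumieu) class. All terms of the
  \<open>k\<^sub>i\<close>-th partial sum are nonnegative, so it is at least
  \<open>\<omega>\<^bsub>j\<^sub>i,k\<^sub>i\<^esub> F\<^bsub>j\<^sub>i\<^esub> a\<^bsup>j\<^sub>i\<^esup> \<ge> ((i+1)a)\<^bsup>j\<^sub>i\<^esup>/2\<close>, which tends to infinity for every \<open>a > 0\<close>.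
\<close>

lemma Lambda_Beurling_subset_Roumieu: "Lambda_Beurling N \<subseteq> Lambda_Roumieu N"
  unfolding Lambda_Beurling_def Lambda_Roumieu_def by (auto intro: exI[of _ 1])

lemma Lambda_BeurlingI:
  assumes "\<And>h. h > 0 \<Longrightarrow> \<exists>C. \<forall>\<alpha>. cmod (b \<alpha>) / (h ^ \<alpha> * normseq N \<alpha>) \<le> C"
  shows "b \<in> Lambda_Beurling N"
  unfolding Lambda_Beurling_def lambda_seminorm_def
proof (intro CollectI allI impI)
  fix h :: real
  assume "h > 0"
  then obtain C where "\<And>\<alpha>. cmod (b \<alpha>) / (h ^ \<alpha> * normseq N \<alpha>) \<le> C"
    using assms by blast
  then have "(SUP \<alpha>. ereal (cmod (b \<alpha>) / (h ^ \<alpha> * normseq N \<alpha>))) \<le> ereal C"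
    by (intro SUP_least) simp
  then show "(SUP \<alpha>. ereal (cmod (b \<alpha>) / (h ^ \<alpha> * normseq N \<alpha>))) < \<infinity>"
    using order_le_less_trans by fastforce
qed

lemma frequently_ge_if_SUP_eq_infty:
  fixes f :: "nat \<Rightarrow> real"
  assumes "(SUP k\<in>{0<..}. ereal (f k)) = \<infinity>"
  shows "\<exists>\<^sub>F k in sequentially. B \<le> f k"
proof (rule ccontr)
  assume "\<not> (\<exists>\<^sub>F k in sequentially. B \<le> f k)"
  then obtain K where small: "\<And>k. k \<ge> K \<Longrightarrow> f k < B"
    unfolding frequently_sequentially by (meson not_le)
  define C where "C = \<bar>B\<bar> + (\<Sum>j<K. \<bar>f j\<bar>)"
  have "f k \<le> C" for k
  proof (cases "k < K")
    case True
    then have "\<bar>f k\<bar> \<le> (\<Sum>j<K. \<bar>f j\<bar>)"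
      by (intro member_le_sum) auto
    then show ?thesis unfolding C_def by linarith
  next
    case False
    then have "f k < B" by (intro small) simp
    moreover have "0 \<le> (\<Sum>j<K. \<bar>f j\<bar>)" by (intro sum_nonneg) simp
    ultimately show ?thesis unfolding C_def by linarith
  qed
  then have "(SUP k\<in>{0<..}. ereal (f k)) \<le> ereal C"
    by (intro SUP_least) simp
  with assms show False by simp
qed

lemma limsup_eq_infty_if_subseq_tendsto_at_top:
  fixes u :: "nat \<Rightarrow> real" and r :: "nat \<Rightarrow> nat"
  assumes "strict_mono r" and "filterlim (u \<circ> r) at_top sequentially"
  shows "limsup (\<lambda>k. ereal (u k)) = \<infinity>"
proof -
  have "((\<lambda>i. ereal (u (r i))) \<longlongrightarrow> \<infinity>) sequentially"
    using assms(2) by (simp add: tendsto_PInfty_eq_at_top comp_def)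
  then have "limsup ((\<lambda>k. ereal (u k)) \<circ> r) = \<infinity>"
    by (simp add: comp_def lim_imp_Limsup)
  moreover have "limsup ((\<lambda>k. ereal (u k)) \<circ> r) \<le> limsup (\<lambda>k. ereal (u k))"
    using assms(1) by (rule limsup_subseq_mono)
  ultimately show ?thesis by (simp add: top_unique[unfolded top_ereal_def])
qed

lemma lacunary_selection:
  fixes n :: "nat \<Rightarrow> real" and \<omega> :: "nat \<Rightarrow> nat \<Rightarrow> real"
  assumes \<omega>_lim: "\<And>j. (\<lambda>k. \<omega> j k) \<longlonglongrightarrow> 1"
    and large: "\<And>B. \<exists>\<^sub>F j in sequentially. B \<le> root j (n j)"
  obtains js ks :: "nat \<Rightarrow> nat" where
    "\<And>i. 0 < js i" "\<And>i. js i < ks i" "\<And>i. ks i \<le> js (Suc i)"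
    "\<And>i. (real (Suc i))\<^sup>2 \<le> root (js i) (n (js i))"
    "\<And>i j. j \<le> js i \<Longrightarrow> 1/2 < \<omega> j (ks i)"
proof -
  have "\<exists>k>J. \<forall>k'\<ge>k. \<forall>j\<le>J. 1/2 < \<omega> j k'" for J
  proof -
    have "\<forall>\<^sub>F k in sequentially. \<forall>j\<in>{..J}. 1/2 < \<omega> j k"
      by (intro eventually_ball_finite ballI order_tendstoD(1)[OF \<omega>_lim]) auto
    then obtain K where "\<forall>k\<ge>K. \<forall>j\<le>J. 1/2 < \<omega> j k"
      unfolding eventually_sequentially by auto
    then show ?thesis by (intro exI[of _ "max K (Suc J)"]) auto
  qed
  then obtain kk where kk_gt: "\<And>J. J < kk J"
    and kk_\<omega>: "\<And>J k j. kk J \<le> k \<Longrightarrow> j \<le> J \<Longrightarrow> 1/2 < \<omega> j k"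
    by metis
  have "\<exists>j\<ge>K. 0 < j \<and> (real (Suc i))\<^sup>2 \<le> root j (n j)" for K i
    using large[of "(real (Suc i))\<^sup>2"] unfolding frequently_sequentially
    by (metis Suc_le_eq max.bounded_iff)
  then obtain g where g_ge: "\<And>K i. K \<le> g K i" and g_pos: "\<And>K i. 0 < g K i"
    and g_root: "\<And>K i. (real (Suc i))\<^sup>2 \<le> root (g K i) (n (g K i))"
    by metis
  define js where "js = rec_nat (g 0 0) (\<lambda>i j. g (kk j) (Suc i))"
  have js_0: "js 0 = g 0 0" and js_Suc: "js (Suc i) = g (kk (js i)) (Suc i)" for i
    by (simp_all add: js_def)
  show thesis
  proof (rule that[of js "\<lambda>i. kk (js i)"])
    show "0 < js i" for i by (cases i) (simp_all add: js_0 js_Suc g_pos)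
    show "(real (Suc i))\<^sup>2 \<le> root (js i) (n (js i))" for i
      by (cases i) (simp_all only: js_0 js_Suc g_root)
    show "kk (js i) \<le> js (Suc i)" for i by (simp add: js_Suc g_ge)
    show "js i < kk (js i)" for i by (rule kk_gt)
    show "1/2 < \<omega> j (kk (js i))" if "j \<le> js i" for i j
      using that by (intro kk_\<omega>) simp_all
  qed
qed

lemma strict_mono_interlacing:
  fixes js ks :: "nat \<Rightarrow> nat"
  assumes "\<And>i. js i < ks i" and "\<And>i. ks i \<le> js (Suc i)"
  shows "strict_mono js" and "strict_mono ks"
  unfolding strict_mono_Suc_iff using assms order_less_le_trans order_le_less_trans by blast+

definition lacunary_coeffs :: "(nat \<Rightarrow> real) \<Rightarrow> (nat \<Rightarrow> nat) \<Rightarrow> nat \<Rightarrow> real" where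
  "lacunary_coeffs n js j = (if j \<in> range js then n j / real (Suc (inv js j)) ^ j else 0)"

lemma lacunary_coeffs_at:
  "inj js \<Longrightarrow> lacunary_coeffs n js (js i) = n (js i) / real (Suc i) ^ js i"
  by (simp add: lacunary_coeffs_def)

lemma lacunary_coeffs_nonneg: "(\<And>j. 0 \<le> n j) \<Longrightarrow> 0 \<le> lacunary_coeffs n js j"
  by (simp add: lacunary_coeffs_def)

lemma lacunary_coeffs_bounded:
  assumes n_pos: "\<And>j. 0 < n j" and "inj js" and "h > 0"
  shows "\<exists>C. \<forall>\<alpha>. \<bar>lacunary_coeffs n js \<alpha>\<bar> / (h ^ \<alpha> * n \<alpha>) \<le> C"
proof -
  define I where "I = nat \<lceil>1 / h\<rceil>"
  define C where "C = 1 + (\<Sum>i<I. (1 / (real (Suc i) * h)) ^ js i)"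
  have C_ge_1: "1 \<le> C"
    unfolding C_def using \<open>h > 0\<close> by (simp add: sum_nonneg)
  have "\<bar>lacunary_coeffs n js \<alpha>\<bar> / (h ^ \<alpha> * n \<alpha>) \<le> C" for \<alpha>
  proof (cases "\<alpha> \<in> range js")
    case False
    then show ?thesis using C_ge_1 by (simp add: lacunary_coeffs_def)
  next
    case True
    then obtain i where \<alpha>: "\<alpha> = js i" by blast
    have "\<bar>lacunary_coeffs n js \<alpha>\<bar> / (h ^ \<alpha> * n \<alpha>) = (1 / (real (Suc i) * h)) ^ js i"
      using n_pos[of "js i"] \<open>h > 0\<close>
      by (simp add: \<alpha> lacunary_coeffs_at[OF \<open>inj js\<close>] power_mult_distrib power_one_over)
    also have "\<dots> \<le> C"
    proof (cases "i < I")
      case True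
      then have "(1 / (real (Suc i) * h)) ^ js i \<le> (\<Sum>i<I. (1 / (real (Suc i) * h)) ^ js i)"
        using \<open>h > 0\<close> by (intro member_le_sum) auto
      then show ?thesis unfolding C_def by linarith
    next
      case False
      then have "1 / h \<le> real i" unfolding I_def by linarith
      then have "1 \<le> real (Suc i) * h"
        using \<open>h > 0\<close> by (simp add: field_simps)
      then have "(1 / (real (Suc i) * h)) ^ js i \<le> 1"
        by (intro power_le_one) auto
      then show ?thesis using C_ge_1 by linarith
    qed
    finally show ?thesis .
  qed
  then show ?thesis by blast
qed

lemma lacunary_coeffs_ge:
  assumes "inj js" and "0 < js i" and "0 \<le> n (js i)"
    and "(real (Suc i))\<^sup>2 \<le> root (js i) (n (js i))"
  shows "real (Suc i) ^ js i \<le> lacunary_coeffs n js (js i)"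
proof -
  have "((real (Suc i))\<^sup>2) ^ js i \<le> root (js i) (n (js i)) ^ js i"
    using assms(4) by (intro power_mono) simp_all
  also have "\<dots> = n (js i)"
    using assms(2,3) by simp
  finally have "real (Suc i) ^ js i * real (Suc i) ^ js i \<le> n (js i)"
    by (simp add: power2_eq_square power_mult_distrib)
  then show ?thesis
    by (simp add: lacunary_coeffs_at[OF \<open>inj js\<close>] field_simps)
qed

text \<open>
  The nonzero terms of the \<open>ks i\<close>-th partial sum have \<open>j = js l\<close> with \<open>l \<le> i\<close>, since
  \<open>ks i \<le> js (Suc i)\<close>; hence \<open>\<omega> j (ks i) > 0\<close> for them and the sum dominates its top term.
\<close>
lemma lacunary_partial_sum_ge:
  fixes \<omega> :: "nat \<Rightarrow> nat \<Rightarrow> real"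
  assumes n_nonneg: "\<And>j. 0 \<le> n j"
    and js_ks: "\<And>i. js i < ks i" and ks_js: "\<And>i. ks i \<le> js (Suc i)"
    and \<omega>_gt: "\<And>i j. j \<le> js i \<Longrightarrow> 1/2 < \<omega> j (ks i)"
    and "0 \<le> a"
  shows "\<omega> (js i) (ks i) * lacunary_coeffs n js (js i) * a ^ js i
           \<le> (\<Sum>j<ks i. \<omega> j (ks i) * lacunary_coeffs n js j * a ^ j)"
proof (rule member_le_sum)
  note mono = strict_mono_interlacing(1)[of js ks, OF js_ks ks_js]
  fix j
  assume "j \<in> {..<ks i} - {js i}"
  then have "j < ks i" by simp
  show "0 \<le> \<omega> j (ks i) * lacunary_coeffs n js j * a ^ j"
  proof (cases "j \<in> range js")
    case False
    then show ?thesis by (simp add: lacunary_coeffs_def)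
  next
    case True
    then obtain l where l: "j = js l" by blast
    have "l \<le> i"
    proof (rule ccontr)
      assume "\<not> l \<le> i"
      then have "js (Suc i) \<le> js l" using mono by (simp add: strict_mono_less_eq)
      with \<open>j < ks i\<close> l ks_js[of i] show False by linarith
    qed
    then have "1/2 < \<omega> j (ks i)"
      using mono l by (intro \<omega>_gt) (simp add: strict_mono_less_eq)
    then show ?thesis
      using lacunary_coeffs_nonneg[OF n_nonneg] \<open>0 \<le> a\<close> by simp
  qed
qed (use js_ks in simp_all)

lemma limsup_lacunary_partial_sums:
  fixes \<omega> :: "nat \<Rightarrow> nat \<Rightarrow> real"
  assumes n_nonneg: "\<And>j. 0 \<le> n j"
    and js_pos: "\<And>i. 0 < js i"
    and js_ks: "\<And>i. js i < ks i" and ks_js: "\<And>i. ks i \<le> js (Suc i)"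
    and root_ge: "\<And>i. (real (Suc i))\<^sup>2 \<le> root (js i) (n (js i))"
    and \<omega>_gt: "\<And>i j. j \<le> js i \<Longrightarrow> 1/2 < \<omega> j (ks i)"
    and "0 < a"
  shows "limsup (\<lambda>k. ereal (cmod (\<Sum>j<k. of_real (\<omega> j k) *
            complex_of_real (lacunary_coeffs n js j) * of_real a ^ j))) = \<infinity>"
proof -
  let ?F = "lacunary_coeffs n js"
  let ?S = "\<lambda>k. \<Sum>j<k. \<omega> j k * ?F j * a ^ j"
  note js_mono = strict_mono_interlacing(1)[of js ks, OF js_ks ks_js]
  note ks_mono = strict_mono_interlacing(2)[of js ks, OF js_ks ks_js]
  have lower: "real (Suc i) * a / 2 \<le> \<bar>?S (ks i)\<bar>" if "1 \<le> real (Suc i) * a" for i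
  proof -
    have "real (Suc i) * a \<le> (real (Suc i) * a) ^ js i"
      using power_increasing[of 1 "js i" "real (Suc i) * a"] that js_pos[of i] by simp
    also have "\<dots> \<le> ?F (js i) * a ^ js i"
    proof -
      have "real (Suc i) ^ js i \<le> ?F (js i)"
        using strict_mono_imp_inj_on[OF js_mono] js_pos n_nonneg root_ge
        by (rule lacunary_coeffs_ge)
      then show ?thesis
        unfolding power_mult_distrib using \<open>0 < a\<close> by (simp add: mult_right_mono)
    qed
    also have "\<dots> \<le> 2 * (\<omega> (js i) (ks i) * ?F (js i) * a ^ js i)"
    proof -
      have "0 \<le> ?F (js i) * a ^ js i"
        using lacunary_coeffs_nonneg[of n] n_nonneg \<open>0 < a\<close> by simp
      then have "?F (js i) * a ^ js i * 1 \<le> ?F (js i) * a ^ js i * (2 * \<omega> (js i) (ks i))"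
        using \<omega>_gt[of "js i" i] by (intro mult_left_mono) simp_all
      then show ?thesis by (simp add: algebra_simps)
    qed
    also have "\<dots> \<le> 2 * ?S (ks i)"
      using lacunary_partial_sum_ge[of n js ks \<omega> a i] n_nonneg js_ks ks_js \<omega>_gt \<open>0 < a\<close>
      by simp
    finally show ?thesis by linarith
  qed
  have "filterlim (\<lambda>i. \<bar>?S (ks i)\<bar>) at_top sequentially"
    unfolding filterlim_at_top
  proof
    fix Z :: real
    have "\<forall>\<^sub>F i in sequentially. max (2 * Z / a) (1 / a) \<le> real i"
      using filterlim_real_sequentially unfolding filterlim_at_top by (rule spec)
    then show "\<forall>\<^sub>F i in sequentially. Z \<le> \<bar>?S (ks i)\<bar>"
    proof (rule eventually_mono)
      fix i
      assume "max (2 * Z / a) (1 / a) \<le> real i"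
      then have "1 \<le> real (Suc i) * a" and "Z \<le> real (Suc i) * a / 2"
        using \<open>0 < a\<close> by (simp_all add: field_simps)
      then show "Z \<le> \<bar>?S (ks i)\<bar>" using lower by force
    qed
  qed
  then have "limsup (\<lambda>k. ereal \<bar>?S k\<bar>) = \<infinity>"
    using ks_mono by (intro limsup_eq_infty_if_subseq_tendsto_at_top) (simp_all add: comp_def)
  moreover have "(\<Sum>j<k. of_real (\<omega> j k) * complex_of_real (?F j) * of_real a ^ j)
                   = of_real (?S k)" for k
    by simp
  ultimately show ?thesis by (simp only: norm_of_real)
qed

lemma Beurling_coeffs_with_divergent_partial_sums:
  fixes N :: "nat \<Rightarrow> real" and \<omega> :: "nat \<Rightarrow> nat \<Rightarrow> real"
  assumes N_pos: "\<And>j. 0 < N j"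
    and \<omega>_lim: "\<And>j. (\<lambda>k. \<omega> j k) \<longlonglongrightarrow> 1"
    and large: "\<And>B. \<exists>\<^sub>F j in sequentially. B \<le> root j (normseq N j)"
  shows "\<exists>F\<in>Lambda_Beurling N. \<forall>a>0.
           limsup (\<lambda>k. ereal (cmod (\<Sum>j<k. of_real (\<omega> j k) * F j * of_real a ^ j))) = \<infinity>"
proof -
  obtain js ks where js_pos: "\<And>i. 0 < js i" and js_ks: "\<And>i. js i < ks i"
    and ks_js: "\<And>i. ks i \<le> js (Suc i)"
    and root_ge: "\<And>i. (real (Suc i))\<^sup>2 \<le> root (js i) (normseq N (js i))"
    and \<omega>_gt: "\<And>i j. j \<le> js i \<Longrightarrow> 1/2 < \<omega> j (ks i)"
    by (rule lacunary_selection[of \<omega> "normseq N", OF \<omega>_lim large]) blast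
  have n_pos: "0 < normseq N j" for j
    using N_pos by (simp add: normseq_def)
  have "inj js"
    using strict_mono_interlacing(1)[of js ks, OF js_ks ks_js] by (rule strict_mono_imp_inj_on)
  define F where "F j = complex_of_real (lacunary_coeffs (normseq N) js j)" for j
  have "F \<in> Lambda_Beurling N"
    unfolding F_def using lacunary_coeffs_bounded[OF n_pos \<open>inj js\<close>]
    by (intro Lambda_BeurlingI) simp
  moreover have "limsup (\<lambda>k. ereal (cmod (\<Sum>j<k. of_real (\<omega> j k) * F j * of_real a ^ j))) = \<infinity>"
    if "0 < a" for a
    unfolding F_def using n_pos js_pos js_ks ks_js root_ge \<omega>_gt \<open>0 < a\<close>
    by (intro limsup_lacunary_partial_sums) (simp_all add: less_imp_le)
  ultimately show ?thesis by blast
qed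

theorem mainTheorem2:
  fixes M N :: "nat \<Rightarrow> real" and \<omega> :: "nat \<Rightarrow> nat \<Rightarrow> real"
  assumes "weight_sequence M" and "quasianalytic M"
    and "weight_sequence N" and "quasianalytic N"
    and "representation_coeffs M \<omega>"
  shows "((SUP k\<in>{0<..}. ereal (root k (normseq N k))) = \<infinity> \<longrightarrow>
           (\<exists>F\<in>Lambda_Roumieu N. \<exists>a0. 0 < a0 \<and> a0 \<le> 1 \<and>
              (\<forall>a. 0 < a \<and> a \<le> a0 \<longrightarrow>
                 limsup (\<lambda>k. ereal (cmod (\<Sum>j<k. of_real (\<omega> j k) * F j * of_real a ^ j))) = \<infinity>)))
       \<and> (filterlim (\<lambda>k. root k (normseq N k)) at_top sequentially \<longrightarrow>
           (\<exists>F\<in>Lambda_Beurling N. \<exists>a0. 0 < a0 \<and> a0 \<le> 1 \<and>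
              (\<forall>a. 0 < a \<and> a \<le> a0 \<longrightarrow>
                 limsup (\<lambda>k. ereal (cmod (\<Sum>j<k. of_real (\<omega> j k) * F j * of_real a ^ j))) = \<infinity>)))"
proof -
  have N_pos: "\<And>j. 0 < N j"
    using \<open>weight_sequence N\<close> by (simp add: weight_sequence_def)
  have \<omega>_lim: "\<And>j. (\<lambda>k. \<omega> j k) \<longlonglongrightarrow> 1"
    using \<open>representation_coeffs M \<omega>\<close> by (simp add: representation_coeffs_def)
  note divergent = Beurling_coeffs_with_divergent_partial_sums[of N \<omega>, OF N_pos \<omega>_lim]
  show ?thesis
  proof (intro conjI impI)
    assume "(SUP k\<in>{0<..}. ereal (root k (normseq N k))) = \<infinity>"
    then have "\<exists>\<^sub>F k in sequentially. B \<le> root k (normseq N k)" for B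
      by (rule frequently_ge_if_SUP_eq_infty)
    then obtain F where "F \<in> Lambda_Beurling N" and "\<forall>a>0.
        limsup (\<lambda>k. ereal (cmod (\<Sum>j<k. of_real (\<omega> j k) * F j * of_real a ^ j))) = \<infinity>"
      using divergent by blast
    then show "\<exists>F\<in>Lambda_Roumieu N. \<exists>a0. 0 < a0 \<and> a0 \<le> 1 \<and> (\<forall>a. 0 < a \<and> a \<le> a0 \<longrightarrow>
        limsup (\<lambda>k. ereal (cmod (\<Sum>j<k. of_real (\<omega> j k) * F j * of_real a ^ j))) = \<infinity>)"
      using Lambda_Beurling_subset_Roumieu by (intro bexI[of _ F] exI[of _ 1]) auto
  next
    assume "filterlim (\<lambda>k. root k (normseq N k)) at_top sequentially"
    then have "\<exists>\<^sub>F k in sequentially. B \<le> root k (normseq N k)" for B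
      by (intro eventually_frequently) (simp_all add: filterlim_at_top)
    then obtain F where "F \<in> Lambda_Beurling N" and "\<forall>a>0.
        limsup (\<lambda>k. ereal (cmod (\<Sum>j<k. of_real (\<omega> j k) * F j * of_real a ^ j))) = \<infinity>"
      using divergent by blast
    then show "\<exists>F\<in>Lambda_Beurling N. \<exists>a0. 0 < a0 \<and> a0 \<le> 1 \<and> (\<forall>a. 0 < a \<and> a \<le> a0 \<longrightarrow>
        limsup (\<lambda>k. ereal (cmod (\<Sum>j<k. of_real (\<omega> j k) * F j * of_real a ^ j))) = \<infinity>)"
      by (intro bexI[of _ F] exI[of _ 1]) auto
  qed
qed

end
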